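(* Let $n,k\ge1$ and let $\bar x,\bar y\in\mathbb{Z}/2^{n+k-1}\mathbb{Z}$. There is an arrow (of either colour) from $\overline{H}_{M_k}(\bar x)$ to $\overline{H}_{M_k}(\bar y)$ in $\Gamma_{2^n}$ if and only if there exist $\bar a\in[\bar x]$ and $\bar b\in[\bar y]$ with an arrow $\bar a\to\bar b$ in $\Gamma_{2^{n+k-1}}$. Moreover, in that case the arrows of $\Gamma_{2^{n+k-1}}$ from elements of $[\bar x]$ to elements of $[\bar y]$ define a bijection $[\bar x]\to[\bar y]$ (each element of $[\bar x]$ has exactly one such outgoing arrow and each element of $[\bar y]$ exactly one such incoming arrow).
   Context: $T(x)=x/2$ for $x$ even, $T(x)=(3x+1)/2$ for $x$ odd, extended to $\mathbb{Z}_2$; $T_0(x)=x/2$, $T_1(x)=(3x+1)/2$. $\Gamma_d$ is the directed graph on $\mathbb{Z}/d\mathbb{Z}$ with a black arrow $r\to s$ iff there exist positive integers $x\equiv r$, $y\equiv s\pmod d$ with $x$ even and $T_0(x)=y$, and a red arrow $r\to s$ iff there exist such $x,y$ with $x$ odd and $T_1(x)=y$. The parity vector map $\Phi^{-1}:\mathbb{Z}_2\to\mathbb{Z}_2$ is $\Phi^{-1}(x)=\sum_{i\ge0}(T^i(x)\bmod 2)2^i$; it is a bijection with inverse $\Phi$. For $k\ge1$, $M_k(\sum_i a_i2^i)=\sum_i m_i2^i$ with $m_i\equiv a_i+\cdots+a_{i+k-1}\pmod2$, and $H_{M_k}=\Phi\circ M_k\circ\Phi^{-1}$, which commutes with $T$.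 The residue of $H_{M_k}(x)$ mod $2^n$ depends only on $x$ mod $2^{n+k-1}$; $\overline{H}_{M_k}:\mathbb{Z}/2^{n+k-1}\mathbb{Z}\to\mathbb{Z}/2^n\mathbb{Z}$ is the induced map, and $[\bar x]=\overline{H}_{M_k}^{-1}(\{\overline{H}_{M_k}(\bar x)\})$. *)

theory Defs
  imports Main
begin

text \<open>2-adic integers are represented by their binary digit sequences:
  x = sum_i (if x i then 2^i else 0).\<close>
type_synonym z2 = "nat \<Rightarrow> bool"

definition trunc2 :: "nat \<Rightarrow> z2 \<Rightarrow> nat" where
  "trunc2 n x = (\<Sum>i<n. if x i then 2^i else 0)"

definition lift2 :: "nat \<Rightarrow> nat \<Rightarrow> z2" where
  "lift2 m r = (\<lambda>i. i < m \<and> odd (r div 2^i))"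

definition Tnat :: "nat \<Rightarrow> nat" where
  "Tnat x = (if even x then x div 2 else (3 * x + 1) div 2)"

text \<open>Collatz map on Z_2: digit i of T(x) is digit i of T(x mod 2^(i+2)),
  since T(x) mod 2^(i+1) depends only on x mod 2^(i+2).\<close>
definition T2 :: "z2 \<Rightarrow> z2" where
  "T2 x = (\<lambda>i. odd (Tnat (trunc2 (i + 2) x) div 2^i))"

definition PhiInv :: "z2 \<Rightarrow> z2" where
  "PhiInv x = (\<lambda>i. (T2 ^^ i) x 0)"

definition Phi :: "z2 \<Rightarrow> z2" where
  "Phi = inv PhiInv"

definition Mk :: "nat \<Rightarrow> z2 \<Rightarrow> z2" where
  "Mk k a = (\<lambda>i. odd (card {j. i \<le> j \<and> j < i + k \<and> a j}))"

definition HM :: "nat \<Rightarrow> z2 \<Rightarrow> z2" where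
  "HM k = Phi \<circ> Mk k \<circ> PhiInv"

text \<open>induced map Z/2^(n+k-1) -> Z/2^n (residues represented in {0..<2^m})\<close>
definition HMbar :: "nat \<Rightarrow> nat \<Rightarrow> nat \<Rightarrow> nat" where
  "HMbar k n r = trunc2 n (HM k (lift2 (n + k - 1) r))"

definition HMclass :: "nat \<Rightarrow> nat \<Rightarrow> nat \<Rightarrow> nat set" where
  "HMclass k n r = {a \<in> {0..<2^(n + k - 1)}. HMbar k n a = HMbar k n r}"

definition black_arrow :: "nat \<Rightarrow> nat \<Rightarrow> nat \<Rightarrow> bool" where
  "black_arrow d r s = (\<exists>x y :: nat. 0 < x \<and> 0 < y \<and> x mod d = r \<and> y mod d = s
      \<and> even x \<and> y = x div 2)"

definition red_arrow :: "nat \<Rightarrow> nat \<Rightarrow> nat \<Rightarrow> bool" where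
  "red_arrow d r s = (\<exists>x y :: nat. 0 < x \<and> 0 < y \<and> x mod d = r \<and> y mod d = s
      \<and> odd x \<and> y = (3 * x + 1) div 2)"

definition arrow :: "nat \<Rightarrow> nat \<Rightarrow> nat \<Rightarrow> bool" where
  "arrow d r s = (black_arrow d r s \<or> red_arrow d r s)"

end

theory Submission
  imports Defs "HOL-Number_Theory.Cong"
begin

(* Everything is reduced to digit bookkeeping in Z_2, with agreement to N digits
   ("agree N") playing the role of congruence mod 2^N.  Three facts drive the proof:
   (1) T2 expands by one digit: z = w mod 2^(N+1) iff z = w mod 2 and T(z) = T(w) mod 2^N
       (agree_T2), so arrows of Gamma_{2^m} are the pairs (z, T z) mod 2^m (arrow_char);
   (2) the parity vector map and its inverse preserve agreement, so H_{M_k} = Phi o M_k o PhiInv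
       commutes with T and reduces mod 2^n to a map on residues mod 2^(n+k-1);
   (3) M_k is a sliding-window parity, so digit n of H_{M_k}(z) toggles with digit n+k-1
       of z (HM_last_digit) and digit 0 toggles with digit 0 (HM_first_digit).
   Given an arrow [x] -> [y] witnessed by a 2-adic w, each a in [x] has two successors,
   chosen by digit n+k-1 of a lift, and by (3) exactly one lands in [y]; dually each
   b in [y] has two predecessors, chosen by parity, and exactly one lies in [x]. *)

definition agree :: "nat \<Rightarrow> z2 \<Rightarrow> z2 \<Rightarrow> bool" where
  "agree N z w \<longleftrightarrow> (\<forall>i<N. z i = w i)"

lemma trunc2_horner: "trunc2 N z = horner_sum of_bool 2 (map z [0..<N])"
  unfolding trunc2_def horner_sum_eq_sum
  by (intro sum.reindex_bij_witness[of _ id id]) (auto simp: atLeast0LessThan)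

lemma bit_trunc2: "bit (trunc2 N z) i \<longleftrightarrow> i < N \<and> z i"
  by (auto simp: trunc2_horner bit_horner_sum_bit_iff)

lemma trunc2_bit: "trunc2 N (bit c) = c mod 2^N"
  by (simp add: trunc2_horner horner_sum_bit_eq_take_bit take_bit_eq_mod)

lemma trunc2_less: "trunc2 N z < 2^N"
  using horner_sum_of_bool_2_less[of "map z [0..<N]"] by (simp add: trunc2_horner)

lemma agree_iff_trunc2: "agree N z w \<longleftrightarrow> trunc2 N z = trunc2 N w"
proof
  assume "agree N z w"
  then show "trunc2 N z = trunc2 N w"
    unfolding agree_def trunc2_def by (intro sum.cong) auto
next
  assume "trunc2 N z = trunc2 N w"
  then show "agree N z w"
    unfolding agree_def by (metis bit_trunc2)
qed

lemma agree_iff_cong: "agree N z w \<longleftrightarrow> [trunc2 N z = trunc2 N w] (mod 2^N)"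
  by (simp add: agree_iff_trunc2 cong_def trunc2_less)

lemma trunc2_mod: "j \<le> N \<Longrightarrow> trunc2 N z mod 2^j = trunc2 j z"
  by (metis agree_def agree_iff_trunc2 bit_trunc2 order_less_le_trans trunc2_bit)

lemma agree_Suc: "agree (Suc N) z w \<longleftrightarrow> agree N z w \<and> z N = w N"
  by (auto simp: agree_def less_Suc_eq)

lemma agree_shift: "agree (Suc N) z w \<longleftrightarrow> z 0 = w 0 \<and> agree N (\<lambda>i. z (Suc i)) (\<lambda>i. w (Suc i))"
  by (auto simp: agree_def less_Suc_eq_0_disj)

lemma agree_mono: "agree N z w \<Longrightarrow> j \<le> N \<Longrightarrow> agree j z w"
  by (simp add: agree_def)

lemma agree_all: "(\<And>N. agree N z w) \<Longrightarrow> z = w"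
  by (rule ext) (meson agree_def lessI)

lemma bit_cong: "[x = y] (mod 2^Suc i) \<Longrightarrow> bit x i = bit y i" for x y :: nat
  by (metis bit_take_bit_iff cong_def lessI take_bit_eq_mod)

lemma double_Tnat: "2 * Tnat u = (if even u then u else 3 * u + 1)"
  by (simp add: Tnat_def)

(* Key arithmetic fact: for u, v of the same parity, T(u) = T(v) mod 2^N iff
   u = v mod 2^(N+1); the odd case uses that 3 is invertible modulo powers of 2. *)
lemma Tnat_cong_iff:
  fixes u v N :: nat
  assumes "[u = v] (mod 2)"
  shows "[Tnat u = Tnat v] (mod 2^N) \<longleftrightarrow> [u = v] (mod 2^Suc N)"
proof -
  have par: "even u \<longleftrightarrow> even v"
    using assms by (simp add: cong_def even_iff_mod_2_eq_zero)
  have "[Tnat u = Tnat v] (mod 2^N) \<longleftrightarrow> [2 * Tnat u = 2 * Tnat v] (mod 2^Suc N)"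
    by (simp add: cong_def mod_mult_mult1)
  also have "\<dots> \<longleftrightarrow> [u = v] (mod 2^Suc N)"
  proof (cases "even u")
    case True
    then show ?thesis using par by (simp add: double_Tnat)
  next
    case False
    have "coprime (3::nat) (2^Suc N)" by simp
    then have "[3 * u + 1 = 3 * v + 1] (mod 2^Suc N) \<longleftrightarrow> [u = v] (mod 2^Suc N)"
      by (simp only: cong_add_rcancel_nat cong_mult_lcancel_nat)
    then show ?thesis using False par by (simp add: double_Tnat)
  qed
  finally show ?thesis .
qed

lemma Tnat_cong: "[u = v] (mod 2^Suc N) \<Longrightarrow> [Tnat u = Tnat v] (mod 2^N)"
  using Tnat_cong_iff cong_dvd_modulus_nat[of u v "2^Suc N" 2] by simp

lemma trunc2_T2: "trunc2 N (T2 z) = Tnat (trunc2 (Suc N) z) mod 2^N"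
proof -
  have "T2 z i = bit (Tnat (trunc2 (Suc N) z)) i" if "i < N" for i
  proof -
    have "trunc2 (Suc N) z mod 2^Suc (Suc i) = trunc2 (i + 2) z"
      using that trunc2_mod[of "Suc (Suc i)" "Suc N" z] by simp
    then have "[trunc2 (i + 2) z = trunc2 (Suc N) z] (mod 2^Suc (Suc i))"
      using trunc2_less[of "i + 2" z] by (simp add: cong_def)
    then have "[Tnat (trunc2 (i + 2) z) = Tnat (trunc2 (Suc N) z)] (mod 2^Suc i)"
      by (rule Tnat_cong)
    then show ?thesis
      unfolding T2_def by (simp add: bit_cong flip: bit_iff_odd)
  qed
  then have "agree N (T2 z) (bit (Tnat (trunc2 (Suc N) z)))"
    by (simp add: agree_def)
  then show ?thesis by (simp add: agree_iff_trunc2 trunc2_bit)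
qed

lemma agree_T2: "agree (Suc N) z w \<longleftrightarrow> z 0 = w 0 \<and> agree N (T2 z) (T2 w)"
proof -
  define u v where "u = trunc2 (Suc N) z" and "v = trunc2 (Suc N) w"
  have lifts: "agree (Suc N) z w \<longleftrightarrow> [u = v] (mod 2^Suc N)"
    by (simp add: agree_iff_cong u_def v_def)
  have digit0: "z 0 = w 0 \<longleftrightarrow> [u = v] (mod 2)"
    using agree_iff_trunc2[of 1 z w] trunc2_mod[of 1 "Suc N"]
    by (simp add: agree_def cong_def u_def v_def)
  have images: "agree N (T2 z) (T2 w) \<longleftrightarrow> [Tnat u = Tnat v] (mod 2^N)"
    by (simp add: agree_iff_trunc2 trunc2_T2 cong_def u_def v_def)
  show ?thesis
  proof
    assume "agree (Suc N) z w"
    then have lift_cong: "[u = v] (mod 2^Suc N)"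
      using lifts by blast
    then have "[u = v] (mod 2)"
      using cong_dvd_modulus_nat[of u v "2^Suc N" 2] by simp
    then show "z 0 = w 0 \<and> agree N (T2 z) (T2 w)"
      using lift_cong digit0 images Tnat_cong_iff[of u v N] by simp
  next
    assume "z 0 = w 0 \<and> agree N (T2 z) (T2 w)"
    then show "agree (Suc N) z w"
      using lifts digit0 images Tnat_cong_iff[of u v N] by simp
  qed
qed

lemma black_arrow_Tnat:
  "black_arrow d r s \<longleftrightarrow> (\<exists>x. even x \<and> 0 < x \<and> 0 < Tnat x \<and> x mod d = r \<and> Tnat x mod d = s)"
  unfolding black_arrow_def by (metis Tnat_def)

lemma red_arrow_Tnat:
  "red_arrow d r s \<longleftrightarrow> (\<exists>x. odd x \<and> 0 < x \<and> 0 < Tnat x \<and> x mod d = r \<and> Tnat x mod d = s)"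
  unfolding red_arrow_def by (metis Tnat_def)

lemma arrow_Tnat:
  "arrow d r s \<longleftrightarrow> (\<exists>x. 0 < x \<and> 0 < Tnat x \<and> x mod d = r \<and> Tnat x mod d = s)"
  unfolding arrow_def black_arrow_Tnat red_arrow_Tnat by blast

(* Arrows of Gamma_{2^m} are exactly the pairs (z mod 2^m, T(z) mod 2^m) for 2-adic z.
   Positivity is no restriction: a residue mod 2^(m+1) has a representative >= 2. *)
lemma arrow_char: "arrow (2^m) a b \<longleftrightarrow> (\<exists>z. trunc2 m z = a \<and> trunc2 m (T2 z) = b)"
proof
  assume "arrow (2^m) a b"
  then obtain x where x: "x mod 2^m = a" "Tnat x mod 2^m = b"
    unfolding arrow_Tnat by blast
  have "trunc2 m (T2 (bit x)) = Tnat x mod 2^m"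
    using Tnat_cong[of "x mod 2^Suc m" x m] by (simp add: trunc2_T2 trunc2_bit cong_def)
  then show "\<exists>z. trunc2 m z = a \<and> trunc2 m (T2 z) = b"
    using x by (intro exI[of _ "bit x"]) (simp add: trunc2_bit)
next
  assume "\<exists>z. trunc2 m z = a \<and> trunc2 m (T2 z) = b"
  then obtain z where z: "trunc2 m z = a" "trunc2 m (T2 z) = b" by blast
  define x where "x = trunc2 (Suc m) z + 2^Suc m"
  have "[x = trunc2 (Suc m) z] (mod 2^Suc m)"
    by (simp add: x_def cong_def)
  then have "[Tnat x = Tnat (trunc2 (Suc m) z)] (mod 2^m)"
    by (rule Tnat_cong)
  then have "Tnat x mod 2^m = b"
    using z(2) by (simp add: trunc2_T2 cong_def)
  moreover have "x mod 2^m = a"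
    using z(1) trunc2_mod[of m "Suc m" z] by (simp add: x_def)
  moreover have "2 \<le> x"
    using one_le_power[of "2::nat" m] unfolding x_def power_Suc by linarith
  then have "0 < Tnat x"
    by (simp add: Tnat_def)
  ultimately show "arrow (2^m) a b"
    unfolding arrow_Tnat using \<open>2 \<le> x\<close> by (intro exI[of _ x]) simp
qed

lemma PhiInv_0: "PhiInv z 0 = z 0"
  by (simp add: PhiInv_def)

lemma PhiInv_T2: "PhiInv (T2 z) = (\<lambda>i. PhiInv z (Suc i))"
  by (simp add: PhiInv_def funpow_swap1)

lemma agree_PhiInv: "agree N (PhiInv z) (PhiInv w) \<longleftrightarrow> agree N z w"
proof (induction N arbitrary: z w)
  case 0
  then show ?case by (simp add: agree_def)
next
  case (Suc N)
  have "agree (Suc N) (PhiInv z) (PhiInv w) \<longleftrightarrow>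
        z 0 = w 0 \<and> agree N (PhiInv (T2 z)) (PhiInv (T2 w))"
    by (simp add: agree_shift PhiInv_0 PhiInv_T2)
  also have "\<dots> \<longleftrightarrow> agree (Suc N) z w"
    by (simp add: Suc.IH agree_T2)
  finally show ?case .
qed

lemma inj_PhiInv: "inj PhiInv"
  by (rule injI, rule agree_all) (metis agree_PhiInv agree_def)

(* Every finite digit pattern is attained by a parity vector; flipping digit N of z
   flips digit N of its parity vector without changing the earlier ones. *)
lemma PhiInv_approx: "\<exists>z. agree N (PhiInv z) p"
proof (induction N)
  case 0
  then show ?case by (simp add: agree_def)
next
  case (Suc N)
  then obtain z where z: "agree N (PhiInv z) p" by blast
  define z' where "z' = z(N := \<not> z N)"
  have "agree N z z'" and "\<not> agree (Suc N) z z'"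
    by (simp_all add: agree_def agree_Suc z'_def)
  then have "agree N (PhiInv z) (PhiInv z')" and "\<not> agree (Suc N) (PhiInv z) (PhiInv z')"
    by (simp_all add: agree_PhiInv)
  then have "PhiInv z N \<noteq> PhiInv z' N"
    by (simp add: agree_Suc)
  moreover have "agree N (PhiInv z') p"
    using z \<open>agree N (PhiInv z) (PhiInv z')\<close> by (simp add: agree_def)
  ultimately have "agree (Suc N) (PhiInv z) p \<or> agree (Suc N) (PhiInv z') p"
    using z by (auto simp: agree_Suc)
  then show ?case by blast
qed

(* Surjectivity of PhiInv by compactness: the approximate preimages are coherent
   and converge digitwise. *)
lemma surj_PhiInv: "surj PhiInv"
proof -
  have "\<exists>z. PhiInv z = p" for p
  proof -
    define zs where "zs N = (SOME z. agree N (PhiInv z) p)" for N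
    have zs: "agree N (PhiInv (zs N)) p" for N
      unfolding zs_def by (rule someI_ex[OF PhiInv_approx])
    have coherent: "agree N (zs N) (zs N')" if "N \<le> N'" for N N'
    proof -
      have "agree N (PhiInv (zs N)) (PhiInv (zs N'))"
        using zs[of N] agree_mono[OF zs[of N'] that] by (simp add: agree_def)
      then show ?thesis by (simp add: agree_PhiInv)
    qed
    define z where "z i = zs (Suc i) i" for i
    have "agree N z (zs N)" for N
      using coherent by (auto simp: agree_def z_def Suc_le_eq)
    then have "agree N (PhiInv z) (PhiInv (zs N))" for N
      by (simp add: agree_PhiInv)
    then have "agree N (PhiInv z) p" for N
      using zs[of N] by (simp add: agree_def)
    then show ?thesis by (blast intro: agree_all)
  qed
  then show ?thesis by (metis surjI)
qed

lemma PhiInv_Phi: "PhiInv (Phi q) = q"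
  unfolding Phi_def by (rule surj_f_inv_f[OF surj_PhiInv])

lemma agree_Phi: "agree N (Phi q) (Phi q') \<longleftrightarrow> agree N q q'"
  by (metis agree_PhiInv PhiInv_Phi)

lemma T2_preimage: "\<exists>z. z 0 = e \<and> T2 z = w"
proof -
  define z where "z = Phi (case_nat e (PhiInv w))"
  have PhiInv_z: "PhiInv z = case_nat e (PhiInv w)"
    by (simp add: z_def PhiInv_Phi)
  then have "z 0 = e"
    using PhiInv_0[of z] by simp
  moreover have "PhiInv (T2 z) = PhiInv w"
    using PhiInv_z by (simp add: PhiInv_T2)
  then have "T2 z = w"
    by (rule injD[OF inj_PhiInv])
  ultimately show ?thesis by blast
qed

lemma Mk_window: "Mk k p i = odd (card {j \<in> {i..<i + k}. p j})"
  unfolding Mk_def by (rule arg_cong[where f = "\<lambda>A. odd (card A)"]) auto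

lemma Mk_toggle:
  assumes t: "t \<in> {i..<i + k}" and same: "\<forall>j\<in>{i..<i + k}. j \<noteq> t \<longrightarrow> p j = p' j"
  shows "Mk k p i = Mk k p' i \<longleftrightarrow> p t = p' t"
proof -
  define S where "S q = {j \<in> {i..<i + k}. q j}" for q :: z2
  have card_S: "card (S q) = card (S q - {t}) + of_bool (q t)" for q
  proof (cases "q t")
    case True
    then have "t \<in> S q" using t by (simp add: S_def)
    then have "0 < card (S q)" by (auto simp: S_def card_gt_0_iff)
    then show ?thesis using \<open>t \<in> S q\<close> True by simp
  next
    case False
    then show ?thesis by (simp add: S_def)
  qed
  have "S p - {t} = S p' - {t}"
    using same by (auto simp: S_def)
  moreover have "Mk k p i = odd (card (S p))" "Mk k p' i = odd (card (S p'))"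
    by (simp_all add: Mk_window S_def)
  ultimately show ?thesis
    using card_S[of p] card_S[of p'] by (cases "p t"; cases "p' t") simp_all
qed

lemma Mk_agree: "agree (n + k - 1) p p' \<Longrightarrow> agree n (Mk k p) (Mk k p')"
  unfolding agree_def Mk_window by (intro allI impI arg_cong[where f = "\<lambda>A. odd (card A)"]) auto

lemma Mk_shift: "Mk k (\<lambda>i. p (Suc i)) = (\<lambda>i. Mk k p (Suc i))"
proof
  fix i
  have "{j \<in> {Suc i..<Suc i + k}. p j} = Suc ` {j \<in> {i..<i + k}. p (Suc j)}"
    by (auto simp: image_iff) (metis Suc_le_D Suc_le_mono Suc_less_eq)
  then show "Mk k (\<lambda>i. p (Suc i)) i = Mk k p (Suc i)"
    by (simp add: Mk_window card_image)
qed

(* H_{M_k} is conjugate to M_k via the parity vector map, so it commutes with T2. *)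
lemma PhiInv_HM: "PhiInv (HM k z) = Mk k (PhiInv z)"
  by (simp add: HM_def PhiInv_Phi)

lemma HM_T2: "HM k (T2 z) = T2 (HM k z)"
proof -
  have "PhiInv (HM k (T2 z)) = PhiInv (T2 (HM k z))"
    by (simp add: PhiInv_HM PhiInv_T2 Mk_shift)
  then show ?thesis
    by (rule injD[OF inj_PhiInv])
qed

lemma agree_HM_iff: "agree N (HM k z) (HM k w) \<longleftrightarrow> agree N (Mk k (PhiInv z)) (Mk k (PhiInv w))"
  by (simp add: HM_def agree_Phi)

lemma HM_agree: "agree (n + k - 1) z w \<Longrightarrow> agree n (HM k z) (HM k w)"
  using Mk_agree[of n k "PhiInv z" "PhiInv w"] by (simp add: agree_HM_iff agree_PhiInv)

lemma HM_last_digit: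
  assumes k: "1 \<le> k" and zw: "agree (n + k - 1) z w"
  shows "HM k z n = HM k w n \<longleftrightarrow> z (n + k - 1) = w (n + k - 1)"
proof -
  have zw': "agree (n + k - 1) (PhiInv z) (PhiInv w)"
    using zw by (simp add: agree_PhiInv)
  then have window: "\<forall>j\<in>{n..<n + k}. j \<noteq> n + k - 1 \<longrightarrow> PhiInv z j = PhiInv w j"
    by (auto simp: agree_def)
  have "HM k z n = HM k w n \<longleftrightarrow> agree (Suc n) (HM k z) (HM k w)"
    using HM_agree[OF zw] by (simp add: agree_Suc)
  also have "\<dots> \<longleftrightarrow> Mk k (PhiInv z) n = Mk k (PhiInv w) n"
    using Mk_agree[OF zw'] by (simp add: agree_HM_iff agree_Suc)
  also have "\<dots> \<longleftrightarrow> PhiInv z (n + k - 1) = PhiInv w (n + k - 1)"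
    using k window by (intro Mk_toggle) auto
  also have "\<dots> \<longleftrightarrow> agree (Suc (n + k - 1)) (PhiInv z) (PhiInv w)"
    using zw' by (simp add: agree_Suc)
  also have "\<dots> \<longleftrightarrow> agree (Suc (n + k - 1)) z w"
    by (rule agree_PhiInv)
  also have "\<dots> \<longleftrightarrow> z (n + k - 1) = w (n + k - 1)"
    using zw by (simp add: agree_Suc)
  finally show ?thesis .
qed

lemma HM_first_digit:
  assumes k: "1 \<le> k" "k \<le> Suc m" and zw: "agree m (T2 z) (T2 w)"
  shows "HM k z 0 = HM k w 0 \<longleftrightarrow> z 0 = w 0"
proof -
  have "agree m (PhiInv (T2 z)) (PhiInv (T2 w))"
    using zw by (simp add: agree_PhiInv)
  then have window: "\<forall>j\<in>{0..<0 + k}. j \<noteq> 0 \<longrightarrow> PhiInv z j = PhiInv w j"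
    using k by (auto simp: agree_def PhiInv_T2 gr0_conv_Suc)
  have "HM k z 0 = HM k w 0 \<longleftrightarrow> Mk k (PhiInv z) 0 = Mk k (PhiInv w) 0"
    using PhiInv_0[of "HM k z"] PhiInv_0[of "HM k w"] by (simp add: PhiInv_HM)
  also have "\<dots> \<longleftrightarrow> PhiInv z 0 = PhiInv w 0"
    using k window by (intro Mk_toggle) auto
  finally show ?thesis by (simp add: PhiInv_0)
qed

lemma HMbar_trunc2: "HMbar k n (trunc2 (n + k - 1) z) = trunc2 n (HM k z)"
proof -
  have "agree (n + k - 1) (lift2 (n + k - 1) (trunc2 (n + k - 1) z)) z"
    using bit_trunc2 by (simp add: agree_def lift2_def flip: bit_iff_odd)
  then have "agree n (HM k (lift2 (n + k - 1) (trunc2 (n + k - 1) z))) (HM k z)"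
    by (rule HM_agree)
  then show ?thesis
    unfolding HMbar_def by (simp add: agree_iff_trunc2)
qed

lemma agree_T2_next_digit:
  assumes "1 \<le> N" and "agree N z w"
  shows "agree N (T2 z) (T2 w) \<longleftrightarrow> z N = w N"
proof -
  have "z 0 = w 0"
    using assms by (simp add: agree_def)
  then have "agree N (T2 z) (T2 w) \<longleftrightarrow> agree (Suc N) z w"
    by (simp add: agree_T2)
  then show ?thesis
    using assms(2) by (simp add: agree_Suc)
qed

lemma agree_T2_first_digit:
  assumes "1 \<le> N" and "agree N (T2 z) (T2 w)"
  shows "agree N z w \<longleftrightarrow> z 0 = w 0"
proof
  assume "agree N z w"
  then show "z 0 = w 0"
    using assms(1) by (simp add: agree_def)
next
  assume "z 0 = w 0"
  then have "agree (Suc N) z w"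
    using assms(2) by (simp add: agree_T2)
  then show "agree N z w"
    by (simp add: agree_Suc)
qed

(* HMbar maps arrows of Gamma_{2^(n+k-1)} to arrows of Gamma_{2^n}, as H_{M_k} commutes with T. *)
lemma arrow_HMbar:
  assumes "arrow (2^(n + k - 1)) a b"
  shows "arrow (2^n) (HMbar k n a) (HMbar k n b)"
proof -
  obtain z where z: "trunc2 (n + k - 1) z = a" "trunc2 (n + k - 1) (T2 z) = b"
    using assms unfolding arrow_char by blast
  have "HMbar k n a = trunc2 n (HM k z)"
    using HMbar_trunc2[of k n z] z(1) by simp
  moreover have "HMbar k n b = trunc2 n (T2 (HM k z))"
    using HMbar_trunc2[of k n "T2 z"] z(2) by (simp add: HM_T2)
  ultimately show ?thesis
    unfolding arrow_char by (intro exI[of _ "HM k z"]) simp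
qed

(* A successor of a comes from a lift z of a and lands
   in [y] iff digit n of H_{M_k}(z) equals that of a fixed witness w of the arrow
   [x] -> [y]; by HM_last_digit this fixes digit n+k-1 of z, hence the successor. *)
lemma unique_successor_in_class:
  assumes n: "1 \<le> n" and k: "1 \<le> k"
    and xy: "arrow (2^n) (HMbar k n x) (HMbar k n y)" and a: "a \<in> HMclass k n x"
  shows "\<exists>!b. b \<in> HMclass k n y \<and> arrow (2^(n + k - 1)) a b"
proof -
  define m where "m = n + k - 1"
  have m: "1 \<le> m"
    using n k by (simp add: m_def)
  obtain w where w: "trunc2 n w = HMbar k n x" "trunc2 n (T2 w) = HMbar k n y"
    using xy unfolding arrow_char by blast
  have a_cls: "a < 2^m" "HMbar k n a = HMbar k n x"
    using a by (simp_all add: HMclass_def m_def)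
  have into_y: "HMbar k n (trunc2 m (T2 z)) = HMbar k n y \<longleftrightarrow> HM k z n = w n"
    if z: "trunc2 m z = a" for z
  proof -
    have "trunc2 n (HM k z) = trunc2 n w"
      using z a_cls(2) w(1) HMbar_trunc2[of k n z] by (simp add: m_def)
    then have "agree n (T2 (HM k z)) (T2 w) \<longleftrightarrow> HM k z n = w n"
      using n by (intro agree_T2_next_digit) (simp_all add: agree_iff_trunc2)
    moreover have "HMbar k n (trunc2 m (T2 z)) = trunc2 n (T2 (HM k z))"
      using HMbar_trunc2[of k n "T2 z"] by (simp add: HM_T2 m_def)
    ultimately show ?thesis
      using w(2) by (simp add: agree_iff_trunc2)
  qed
  define lift where "lift d = (bit a)(m := d)" for d
  have lift_agree: "agree m (lift d) (bit a)" for d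
    by (simp add: lift_def agree_def)
  have lift_a: "trunc2 m (lift d) = a" for d
    using lift_agree[of d] a_cls(1) by (simp add: agree_iff_trunc2 trunc2_bit)
  have "agree (n + k - 1) (lift True) (lift False)"
    using lift_agree by (simp add: agree_def m_def)
  then have "HM k (lift True) n \<noteq> HM k (lift False) n"
    using HM_last_digit[OF k] by (simp add: lift_def m_def)
  then obtain d where d: "HM k (lift d) n = w n"
    by (metis (full_types))
  define b where "b = trunc2 m (T2 (lift d))"
  have "HMbar k n b = HMbar k n y"
    using into_y[OF lift_a] d by (simp add: b_def)
  moreover have "b < 2^m"
    by (simp add: b_def trunc2_less)
  moreover have "arrow (2^m) a b"
    unfolding arrow_char b_def using lift_a by blast
  ultimately have b_ok: "b \<in> HMclass k n y \<and> arrow (2^m) a b"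
    by (simp add: HMclass_def m_def)
  have "b' = b" if b': "b' \<in> HMclass k n y" "arrow (2^m) a b'" for b'
  proof -
    obtain z where z: "trunc2 m z = a" "trunc2 m (T2 z) = b'"
      using b'(2) unfolding arrow_char by blast
    have "HM k z n = HM k (lift d) n"
      using into_y[OF z(1)] z(2) b'(1) d by (simp add: HMclass_def)
    moreover have zl: "agree m z (lift d)"
      using z(1) lift_a by (simp add: agree_iff_trunc2)
    ultimately have "z m = lift d m"
      using HM_last_digit[OF k, of n z "lift d"] by (simp add: m_def)
    then have "agree m (T2 z) (T2 (lift d))"
      using agree_T2_next_digit[OF m zl] by simp
    then show ?thesis
      using z(2) by (simp add: b_def agree_iff_trunc2)
  qed
  then show ?thesis
    using b_ok unfolding m_def by blast
qed

(* In-degree part of the bijection, dually: a predecessor of b comes from a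
   T2-preimage z of b and lies in [x] iff digit 0 of H_{M_k}(z) equals that of w;
   by HM_first_digit this fixes the parity of z, hence the predecessor. *)
lemma unique_predecessor_in_class:
  assumes n: "1 \<le> n" and k: "1 \<le> k"
    and xy: "arrow (2^n) (HMbar k n x) (HMbar k n y)" and b: "b \<in> HMclass k n y"
  shows "\<exists>!a. a \<in> HMclass k n x \<and> arrow (2^(n + k - 1)) a b"
proof -
  define m where "m = n + k - 1"
  have m: "1 \<le> m" "k \<le> Suc m"
    using n k by (simp_all add: m_def)
  obtain w where w: "trunc2 n w = HMbar k n x" "trunc2 n (T2 w) = HMbar k n y"
    using xy unfolding arrow_char by blast
  have b_cls: "b < 2^m" "HMbar k n b = HMbar k n y"
    using b by (simp_all add: HMclass_def m_def)
  have from_x: "HMbar k n (trunc2 m z) = HMbar k n x \<longleftrightarrow> HM k z 0 = w 0"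
    if z: "trunc2 m (T2 z) = b" for z
  proof -
    have "trunc2 n (T2 (HM k z)) = trunc2 n (T2 w)"
      using z b_cls(2) w(2) HMbar_trunc2[of k n "T2 z"] by (simp add: HM_T2 m_def)
    then have "agree n (HM k z) w \<longleftrightarrow> HM k z 0 = w 0"
      using n by (intro agree_T2_first_digit) (simp_all add: agree_iff_trunc2)
    moreover have "HMbar k n (trunc2 m z) = trunc2 n (HM k z)"
      using HMbar_trunc2[of k n z] by (simp add: m_def)
    ultimately show ?thesis
      using w(1) by (simp add: agree_iff_trunc2)
  qed
  define lift where "lift d = (SOME z. z 0 = d \<and> T2 z = bit b)" for d
  have lift: "lift d 0 = d" "T2 (lift d) = bit b" for d
    using someI_ex[OF T2_preimage[of d "bit b"]] by (simp_all add: lift_def)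
  have lift_b: "trunc2 m (T2 (lift d)) = b" for d
    using b_cls(1) by (simp add: lift trunc2_bit)
  have "agree m (T2 (lift True)) (T2 (lift False))"
    by (simp add: lift agree_def)
  then have "HM k (lift True) 0 \<noteq> HM k (lift False) 0"
    using HM_first_digit[OF k m(2)] by (simp add: lift)
  then obtain d where d: "HM k (lift d) 0 = w 0"
    by (metis (full_types))
  define a where "a = trunc2 m (lift d)"
  have "HMbar k n a = HMbar k n x"
    using from_x[OF lift_b] d by (simp add: a_def)
  moreover have "a < 2^m"
    by (simp add: a_def trunc2_less)
  moreover have "arrow (2^m) a b"
    unfolding arrow_char a_def using lift_b by blast
  ultimately have a_ok: "a \<in> HMclass k n x \<and> arrow (2^m) a b"
    by (simp add: HMclass_def m_def)
  have "a' = a" if a': "a' \<in> HMclass k n x" "arrow (2^m) a' b" for a'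
  proof -
    obtain z where z: "trunc2 m z = a'" "trunc2 m (T2 z) = b"
      using a'(2) unfolding arrow_char by blast
    have "HM k z 0 = HM k (lift d) 0"
      using from_x[OF z(2)] z(1) a'(1) d by (simp add: HMclass_def)
    moreover have zl: "agree m (T2 z) (T2 (lift d))"
      using z(2) lift_b by (simp add: agree_iff_trunc2)
    ultimately have "z 0 = lift d 0"
      using HM_first_digit[OF k m(2) zl] by simp
    then have "agree m z (lift d)"
      using agree_T2_first_digit[OF m(1) zl] by simp
    then show ?thesis
      using z(1) by (simp add: a_def agree_iff_trunc2)
  qed
  then show ?thesis
    using a_ok unfolding m_def by blast
qed

theorem mainTheorem19:
  fixes n k x y :: nat
  assumes "1 \<le> n" and "1 \<le> k"
    and "x < 2^(n + k - 1)" and "y < 2^(n + k - 1)"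
  shows "(arrow (2^n) (HMbar k n x) (HMbar k n y) \<longleftrightarrow>
          (\<exists>a\<in>HMclass k n x. \<exists>b\<in>HMclass k n y. arrow (2^(n + k - 1)) a b))
       \<and> (arrow (2^n) (HMbar k n x) (HMbar k n y) \<longrightarrow>
          (\<forall>a\<in>HMclass k n x. \<exists>!b. b \<in> HMclass k n y \<and> arrow (2^(n + k - 1)) a b)
        \<and> (\<forall>b\<in>HMclass k n y. \<exists>!a. a \<in> HMclass k n x \<and> arrow (2^(n + k - 1)) a b))"
proof (intro conjI impI ballI iffI)
  assume xy: "arrow (2^n) (HMbar k n x) (HMbar k n y)"
  have "x \<in> HMclass k n x"
    using assms(3) by (simp add: HMclass_def)
  moreover obtain b where "b \<in> HMclass k n y" "arrow (2^(n + k - 1)) x b"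
    using unique_successor_in_class[OF assms(1,2) xy \<open>x \<in> HMclass k n x\<close>] by blast
  ultimately show "\<exists>a\<in>HMclass k n x. \<exists>b\<in>HMclass k n y. arrow (2^(n + k - 1)) a b"
    by blast
next
  assume "\<exists>a\<in>HMclass k n x. \<exists>b\<in>HMclass k n y. arrow (2^(n + k - 1)) a b"
  then obtain a b where "a \<in> HMclass k n x" "b \<in> HMclass k n y" "arrow (2^(n + k - 1)) a b"
    by blast
  then show "arrow (2^n) (HMbar k n x) (HMbar k n y)"
    using arrow_HMbar[of n k a b] by (simp add: HMclass_def)
next
  fix a
  assume "arrow (2^n) (HMbar k n x) (HMbar k n y)" "a \<in> HMclass k n x"
  then show "\<exists>!b. b \<in> HMclass k n y \<and> arrow (2^(n + k - 1)) a b"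
    by (rule unique_successor_in_class[OF assms(1,2)])
next
  fix b
  assume "arrow (2^n) (HMbar k n x) (HMbar k n y)" "b \<in> HMclass k n y"
  then show "\<exists>!a. a \<in> HMclass k n x \<and> arrow (2^(n + k - 1)) a b"
    by (rule unique_predecessor_in_class[OF assms(1,2)])
qed

end
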